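(* Let $\sigma_a$ be any attacker mixed strategy and $0<\epsilon\le n$. Run the greedy algorithm on the function $g(\cdot\mid\sigma_a)$ with a budget of $\ln\left(\frac{n}{\epsilon}\right)k_d$ elements, producing a set $S_d$. Then $$\mathbb{E}_{S_a\sim\sigma_a}[f(S_d,S_a)]\le\min_{|S^*|\le k_d}\mathbb{E}_{S_a\sim\sigma_a}[f(S^*,S_a)]+\epsilon.$$
   Context: Setting: $n$ voters $V$, channels $C$, edge probabilities $p_{uv},q_{uv}\in[0,1]$ (0 for non-edges), known preferences $\theta_v\in\{0,1\}$, and $f(S_d,S_a)=\sum_{v\in V}\theta_v\left(\prod_{u\in S_d}(1-q_{uv})\right)\left(1-\prod_{u\in S_a}(1-p_{uv})\right)$. An attacker mixed strategy $\sigma_a$ is a distribution over subsets of $C$ of size at most $k_a$. Define $g(S_d\mid\sigma_a)=\mathbb{E}_{S_a\sim\sigma_a}[f(\emptyset,S_a)-f(S_d,S_a)]$. The greedy algorithm with budget $B$ starts from $\emptyset$ and for $B$ steps adds a channel maximizing the marginal gain of $g$. *)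

theory Defs
  imports "HOL-Probability.Probability"
begin

definition fobj :: "'v set \<Rightarrow> ('c \<Rightarrow> 'v \<Rightarrow> real) \<Rightarrow> ('c \<Rightarrow> 'v \<Rightarrow> real) \<Rightarrow> ('v \<Rightarrow> real)
    \<Rightarrow> 'c set \<Rightarrow> 'c set \<Rightarrow> real" where
  "fobj V p q \<theta> Sd Sa =
     (\<Sum>v\<in>V. \<theta> v * (\<Prod>u\<in>Sd. 1 - q u v) * (1 - (\<Prod>u\<in>Sa. 1 - p u v)))"

definition gdef :: "'v set \<Rightarrow> ('c \<Rightarrow> 'v \<Rightarrow> real) \<Rightarrow> ('c \<Rightarrow> 'v \<Rightarrow> real) \<Rightarrow> ('v \<Rightarrow> real)
    \<Rightarrow> 'c set pmf \<Rightarrow> 'c set \<Rightarrow> real" where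
  "gdef V p q \<theta> \<sigma> Sd =
     measure_pmf.expectation \<sigma> (\<lambda>Sa. fobj V p q \<theta> {} Sa - fobj V p q \<theta> Sd Sa)"

text \<open>S is a possible output of the greedy algorithm with budget B on set function g over
  ground set C: starting from the empty set, B times add a channel of C maximising the
  marginal gain (ties broken arbitrarily).\<close>
definition greedy_output :: "('c set \<Rightarrow> real) \<Rightarrow> 'c set \<Rightarrow> nat \<Rightarrow> 'c set \<Rightarrow> bool" where
  "greedy_output g C B S \<longleftrightarrow>
     (\<exists>cs. length cs = B \<and> S = set cs \<and>
        (\<forall>i<B. cs ! i \<in> C \<and>
           (\<forall>c\<in>C. g (insert c (set (take i cs))) - g (set (take i cs))
                 \<le> g (insert (cs ! i) (set (take i cs))) - g (set (take i cs)))))"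

end

theory Submission
  imports Defs
begin

(* Writing x u v = 1 - q u v, the expected objective is the weighted survival sum
   \<phi>(S) = \<Sum>v a v * \<Prod>u\<in>S x u v, where a v is \<theta> v times the probability that the attacker
   reaches v.  Hence g(S) = \<phi>({}) - \<phi>(S) is monotone, and the gain of g from adding a set T is
   at most the sum of the gains of its single elements.  This is all the classical greedy
   argument needs: each greedy step closes at least a 1/k fraction of the gap to any k-element
   set, so after ln(n/\<epsilon>) k steps the gap, initially at most \<phi>({}) \<le> n, is at most \<epsilon>. *)

lemma prod_superset_le:
  fixes x :: "'c \<Rightarrow> real"
  assumes "finite B" "A \<subseteq> B" "\<And>c. c \<in> B \<Longrightarrow> 0 \<le> x c \<and> x c \<le> 1"
  shows "prod x B \<le> prod x A"
proof -
  have "prod x B = prod x A * prod x (B - A)"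
    using assms(1,2) by (metis prod.subset_diff mult.commute)
  moreover have "0 \<le> prod x A" "prod x (B - A) \<le> 1"
    using assms(2,3) by (auto intro: prod_nonneg prod_le_1)
  ultimately show ?thesis by (simp add: mult_left_le)
qed

lemma prod_diff_union_le_sum:
  fixes x :: "'c \<Rightarrow> real"
  assumes "finite S" "finite T" "\<And>c. 0 \<le> x c \<and> x c \<le> 1"
  shows "prod x S - prod x (S \<union> T) \<le> (\<Sum>c\<in>T. prod x S - prod x (insert c S))"
  using assms(2)
proof (induction T rule: finite_induct)
  case empty
  then show ?case by simp
next
  case (insert t T)
  have "prod x (S \<union> T) - prod x (insert t (S \<union> T)) \<le> prod x S - prod x (insert t S)"
  proof (cases "t \<in> S \<union> T")
    case True
    then show ?thesis
      using prod_superset_le[of "insert t S" S x] assms by (auto simp: insert_absorb)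
  next
    case False
    \<comment> \<open>adding t outside a set A removes the amount (1 - x t) * prod x A, which is antitone in A\<close>
    have "prod x (S \<union> T) * (1 - x t) \<le> prod x S * (1 - x t)"
      using prod_superset_le[of "S \<union> T" S x] assms insert.hyps(1) by (intro mult_right_mono) auto
    then show ?thesis using False assms(1) insert.hyps(1) by (simp add: algebra_simps)
  qed
  then show ?case using insert by simp
qed

definition survival_sum :: "'v set \<Rightarrow> ('v \<Rightarrow> real) \<Rightarrow> ('c \<Rightarrow> 'v \<Rightarrow> real) \<Rightarrow> 'c set \<Rightarrow> real" where
  "survival_sum V a x S = (\<Sum>v\<in>V. a v * (\<Prod>u\<in>S. x u v))"

lemma survival_sum_nonneg:
  assumes "\<And>v. 0 \<le> a v" "\<And>u v. 0 \<le> x u v"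
  shows "0 \<le> survival_sum V a x S"
  unfolding survival_sum_def using assms by (intro sum_nonneg mult_nonneg_nonneg prod_nonneg) auto

lemma survival_sum_antimono:
  assumes "\<And>v. 0 \<le> a v" "\<And>u v. 0 \<le> x u v \<and> x u v \<le> 1" "finite B" "A \<subseteq> B"
  shows "survival_sum V a x B \<le> survival_sum V a x A"
  unfolding survival_sum_def using assms prod_superset_le[of B A "\<lambda>u. x u _"]
  by (intro sum_mono mult_left_mono) auto

lemma survival_sum_diff_union_le_sum:
  assumes "\<And>v. 0 \<le> a v" "\<And>u v. 0 \<le> x u v \<and> x u v \<le> 1" "finite S" "finite T"
  shows "survival_sum V a x S - survival_sum V a x (S \<union> T)
           \<le> (\<Sum>c\<in>T. survival_sum V a x S - survival_sum V a x (insert c S))"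
proof -
  have "survival_sum V a x S - survival_sum V a x (S \<union> T)
          = (\<Sum>v\<in>V. a v * ((\<Prod>u\<in>S. x u v) - (\<Prod>u\<in>S \<union> T. x u v)))"
    unfolding survival_sum_def by (simp add: sum_subtractf algebra_simps)
  also have "\<dots> \<le> (\<Sum>v\<in>V. a v * (\<Sum>c\<in>T. (\<Prod>u\<in>S. x u v) - (\<Prod>u\<in>insert c S. x u v)))"
    using assms prod_diff_union_le_sum[of S T "\<lambda>u. x u _"] by (intro sum_mono mult_left_mono) auto
  also have "\<dots> = (\<Sum>c\<in>T. survival_sum V a x S - survival_sum V a x (insert c S))"
    unfolding survival_sum_def
    by (simp add: sum_distrib_left sum.swap[of _ T V] sum_subtractf algebra_simps)
  finally show ?thesis .
qed

lemma power_one_minus_inverse_le: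
  fixes k B :: nat and n e :: real
  assumes "0 < k" "0 < e" "e \<le> n" "ln (n / e) * real k \<le> real B"
  shows "(1 - 1 / real k) ^ B \<le> e / n"
proof -
  have "(1 - 1 / real k) ^ B \<le> exp (- 1 / real k) ^ B"
    using assms(1) exp_ge_add_one_self[of "- 1 / real k"] by (intro power_mono) auto
  also have "\<dots> = exp (- (real B / real k))" by (simp flip: exp_of_nat_mult)
  also have "\<dots> \<le> exp (- ln (n / e))"
    using assms(1,4) by (simp add: field_simps)
  also have "\<dots> = e / n" using assms(2,3) by (simp add: exp_minus)
  finally show ?thesis .
qed

context
  fixes g :: "'c set \<Rightarrow> real" and C :: "'c set"
  assumes finite_C: "finite C"
    and mono: "\<And>A B. A \<subseteq> B \<Longrightarrow> B \<subseteq> C \<Longrightarrow> g A \<le> g B"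
    and union_le_sum: "\<And>S T. S \<subseteq> C \<Longrightarrow> T \<subseteq> C \<Longrightarrow> g (S \<union> T) - g S \<le> (\<Sum>c\<in>T. g (insert c S) - g S)"
begin

lemma greedy_output_gap:
  assumes "greedy_output g C B S" "T \<subseteq> C" "card T \<le> k" "0 < k"
  shows "g T - g S \<le> (1 - 1 / real k) ^ B * (g T - g {})"
proof -
  obtain cs where len: "length cs = B" and S: "S = set cs"
    and greedy: "\<And>i. i < B \<Longrightarrow> cs ! i \<in> C \<and>
      (\<forall>c\<in>C. g (insert c (set (take i cs))) - g (set (take i cs))
             \<le> g (insert (cs ! i) (set (take i cs))) - g (set (take i cs)))"
    using assms(1) unfolding greedy_output_def by blast
  define prefix where "prefix i = set (take i cs)" for i
  have prefix_sub: "prefix i \<subseteq> C" for i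
    using greedy len by (auto simp: prefix_def in_set_conv_nth)
  define gap where "gap i = g T - g (prefix i)" for i
  have step: "gap (Suc i) \<le> (1 - 1 / real k) * gap i" if "i < B" for i
  proof -
    let ?gain = "g (insert (cs ! i) (prefix i)) - g (prefix i)"
    have "gap i \<le> g (prefix i \<union> T) - g (prefix i)"
      unfolding gap_def using mono[of T "prefix i \<union> T"] prefix_sub assms(2) by auto
    also have "\<dots> \<le> (\<Sum>c\<in>T. g (insert c (prefix i)) - g (prefix i))"
      using union_le_sum prefix_sub assms(2) by blast
    also have "\<dots> \<le> (\<Sum>c\<in>T. ?gain)"
      using greedy[OF that] assms(2) by (intro sum_mono) (auto simp: prefix_def)
    also have "\<dots> \<le> real k * ?gain"
    proof -
      have "0 \<le> ?gain"
        using mono[of "prefix i" "insert (cs ! i) (prefix i)"] greedy[OF that] prefix_sub by auto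
      then show ?thesis using assms(3) by (simp add: mult_right_mono)
    qed
    finally have "gap i \<le> real k * ?gain" .
    moreover have "prefix (Suc i) = insert (cs ! i) (prefix i)"
      using that len by (simp add: prefix_def take_Suc_conv_app_nth)
    ultimately show ?thesis using assms(4) by (simp add: gap_def field_simps)
  qed
  have "gap i \<le> (1 - 1 / real k) ^ i * gap 0" if "i \<le> B" for i
    using that
  proof (induction i)
    case 0
    then show ?case by simp
  next
    case (Suc i)
    have "gap (Suc i) \<le> (1 - 1 / real k) * gap i" using Suc.prems step by simp
    also have "\<dots> \<le> (1 - 1 / real k) * ((1 - 1 / real k) ^ i * gap 0)"
      using Suc assms(4) by (intro mult_left_mono) auto
    finally show ?case by simp
  qed
  from this[of B] show ?thesis using len S by (simp add: gap_def prefix_def)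
qed

lemma greedy_output_additive_error:
  assumes "greedy_output g C B S" "T \<subseteq> C" "card T \<le> k"
    and "g T - g {} \<le> n" "0 < e" "e \<le> n" "ln (n / e) * real k \<le> real B"
  shows "g T - g S \<le> e"
proof (cases "k = 0")
  case True
  then have "T = {}" using finite_C assms(2,3) finite_subset by fastforce
  moreover have "S \<subseteq> C" using assms(1) by (auto simp: greedy_output_def in_set_conv_nth)
  ultimately show ?thesis using mono[of "{}" S] assms(5) by simp
next
  case False
  have "g T - g S \<le> (1 - 1 / real k) ^ B * (g T - g {})"
    using greedy_output_gap[OF assms(1-3)] False by simp
  also have "\<dots> \<le> e / n * n"
    using power_one_minus_inverse_le[of k e n B] False assms(2,4-7) mono[of "{}" T]
    by (intro mult_mono) auto
  also have "\<dots> = e" using assms(5,6) by simp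
  finally show ?thesis .
qed

end

definition attack_weight :: "'c set pmf \<Rightarrow> ('c \<Rightarrow> 'v \<Rightarrow> real) \<Rightarrow> ('v \<Rightarrow> real) \<Rightarrow> 'v \<Rightarrow> real" where
  "attack_weight \<sigma> p \<theta> v = measure_pmf.expectation \<sigma> (\<lambda>Sa. \<theta> v * (1 - (\<Prod>u\<in>Sa. 1 - p u v)))"

lemma one_minus_prod_one_minus_bounds:
  fixes f :: "'c \<Rightarrow> real"
  assumes "\<And>u. 0 \<le> f u \<and> f u \<le> 1"
  shows "0 \<le> 1 - (\<Prod>u\<in>A. 1 - f u) \<and> 1 - (\<Prod>u\<in>A. 1 - f u) \<le> 1"
  using assms prod_le_1[of A "\<lambda>u. 1 - f u"] prod_nonneg[of A "\<lambda>u. 1 - f u"] by auto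

lemma integrable_attack_weight_integrand:
  fixes p :: "'c \<Rightarrow> 'v \<Rightarrow> real" and \<theta> :: "'v \<Rightarrow> real"
  assumes "\<And>u v. 0 \<le> p u v \<and> p u v \<le> 1"
  shows "integrable (measure_pmf \<sigma>) (\<lambda>Sa. \<theta> v * (1 - (\<Prod>u\<in>Sa. 1 - p u v)))"
proof (rule measure_pmf.integrable_const_bound[where B = "\<bar>\<theta> v\<bar>"])
  show "AE Sa in measure_pmf \<sigma>. norm (\<theta> v * (1 - (\<Prod>u\<in>Sa. 1 - p u v))) \<le> \<bar>\<theta> v\<bar>"
  proof (intro AE_I2)
    fix Sa
    have "\<bar>1 - (\<Prod>u\<in>Sa. 1 - p u v)\<bar> \<le> 1"
      using one_minus_prod_one_minus_bounds[of "\<lambda>u. p u v" Sa] assms by auto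
    then show "norm (\<theta> v * (1 - (\<Prod>u\<in>Sa. 1 - p u v))) \<le> \<bar>\<theta> v\<bar>"
      by (simp add: abs_mult mult_left_le)
  qed
qed simp

lemma attack_weight_bounds:
  assumes "\<And>u v. 0 \<le> p u v \<and> p u v \<le> 1" "0 \<le> \<theta> v" "\<theta> v \<le> 1"
  shows "0 \<le> attack_weight \<sigma> p \<theta> v \<and> attack_weight \<sigma> p \<theta> v \<le> 1"
proof -
  have "0 \<le> \<theta> v * (1 - (\<Prod>u\<in>Sa. 1 - p u v)) \<and> \<theta> v * (1 - (\<Prod>u\<in>Sa. 1 - p u v)) \<le> 1" for Sa
    using one_minus_prod_one_minus_bounds[of "\<lambda>u. p u v" Sa] assms by (auto intro: mult_le_one)
  then show ?thesis
    unfolding attack_weight_def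
    by (auto intro!: integral_nonneg_AE measure_pmf.integral_le_const
               integrable_attack_weight_integrand[where p = p, OF assms(1)]
             simp del: Bochner_Integration.integral_mult_right Bochner_Integration.integral_mult_right_zero)
qed

lemma fobj_eq_sum:
  "fobj V p q \<theta> S = (\<lambda>Sa. \<Sum>v\<in>V. (\<Prod>u\<in>S. 1 - q u v) * (\<theta> v * (1 - (\<Prod>u\<in>Sa. 1 - p u v))))"
  unfolding fobj_def by (auto simp: algebra_simps)

lemma integrable_fobj:
  assumes "\<And>u v. 0 \<le> p u v \<and> p u v \<le> 1"
  shows "integrable (measure_pmf \<sigma>) (fobj V p q \<theta> S)"
  unfolding fobj_eq_sum using integrable_attack_weight_integrand[where p = p, OF assms] by auto

lemma expectation_fobj_eq_survival_sum:
  assumes "\<And>u v. 0 \<le> p u v \<and> p u v \<le> 1"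
  shows "measure_pmf.expectation \<sigma> (fobj V p q \<theta> S)
           = survival_sum V (attack_weight \<sigma> p \<theta>) (\<lambda>u v. 1 - q u v) S"
  unfolding fobj_eq_sum survival_sum_def attack_weight_def
  using integrable_attack_weight_integrand[where p = p, OF assms] by (simp add: mult.commute)

lemma gdef_eq_expectation_diff:
  assumes "\<And>u v. 0 \<le> p u v \<and> p u v \<le> 1"
  shows "gdef V p q \<theta> \<sigma> S
           = measure_pmf.expectation \<sigma> (fobj V p q \<theta> {}) - measure_pmf.expectation \<sigma> (fobj V p q \<theta> S)"
  unfolding gdef_def using integrable_fobj[where p = p, OF assms]
  by (simp add: Bochner_Integration.integral_diff)

lemma gdef_eq_survival_sum_diff:
  assumes "\<And>u v. 0 \<le> p u v \<and> p u v \<le> 1"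
  shows "gdef V p q \<theta> \<sigma> S = survival_sum V (attack_weight \<sigma> p \<theta>) (\<lambda>u v. 1 - q u v) {}
           - survival_sum V (attack_weight \<sigma> p \<theta>) (\<lambda>u v. 1 - q u v) S"
  using gdef_eq_expectation_diff[where p = p, OF assms] expectation_fobj_eq_survival_sum[where p = p, OF assms]
  by simp

lemma gdef_empty [simp]: "gdef V p q \<theta> \<sigma> {} = 0"
  by (simp add: gdef_def)

context
  fixes V :: "'v set" and p q :: "'c \<Rightarrow> 'v \<Rightarrow> real" and \<theta> :: "'v \<Rightarrow> real" and \<sigma> :: "'c set pmf"
  assumes p_bounds: "\<And>u v. 0 \<le> p u v \<and> p u v \<le> 1"
    and q_bounds: "\<And>u v. 0 \<le> q u v \<and> q u v \<le> 1"
    and \<theta>_bounds: "\<And>v. 0 \<le> \<theta> v \<and> \<theta> v \<le> 1"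
begin

private abbreviation (input) \<phi> :: "'c set \<Rightarrow> real" where
  "\<phi> \<equiv> survival_sum V (attack_weight \<sigma> p \<theta>) (\<lambda>u v. 1 - q u v)"

private lemma weights_bounds:
  "0 \<le> attack_weight \<sigma> p \<theta> v" "attack_weight \<sigma> p \<theta> v \<le> 1" "0 \<le> 1 - q u v \<and> 1 - q u v \<le> 1"
  using attack_weight_bounds[where p = p, OF p_bounds] \<theta>_bounds q_bounds[of u v] by auto

lemma gdef_mono:
  assumes "finite B" "A \<subseteq> B"
  shows "gdef V p q \<theta> \<sigma> A \<le> gdef V p q \<theta> \<sigma> B"
  using survival_sum_antimono[of "attack_weight \<sigma> p \<theta>" "\<lambda>u v. 1 - q u v" B A V] weights_bounds assms
  by (simp add: gdef_eq_survival_sum_diff[where p = p, OF p_bounds])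

lemma gdef_union_le_sum:
  assumes "finite S" "finite T"
  shows "gdef V p q \<theta> \<sigma> (S \<union> T) - gdef V p q \<theta> \<sigma> S
           \<le> (\<Sum>c\<in>T. gdef V p q \<theta> \<sigma> (insert c S) - gdef V p q \<theta> \<sigma> S)"
  using survival_sum_diff_union_le_sum[of "attack_weight \<sigma> p \<theta>" "\<lambda>u v. 1 - q u v" S T V]
    weights_bounds assms
  by (simp add: gdef_eq_survival_sum_diff[where p = p, OF p_bounds])

lemma gdef_le_card:
  "gdef V p q \<theta> \<sigma> T \<le> real (card V)"
proof -
  have "0 \<le> \<phi> T"
    using weights_bounds by (intro survival_sum_nonneg) auto
  moreover have "\<phi> {} = (\<Sum>v\<in>V. attack_weight \<sigma> p \<theta> v)"
    by (simp add: survival_sum_def)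
  moreover have "\<dots> \<le> (\<Sum>v\<in>V. 1)"
    using weights_bounds by (intro sum_mono) auto
  ultimately show ?thesis
    by (simp add: gdef_eq_survival_sum_diff[where p = p, OF p_bounds])
qed

end

theorem mainTheorem5:
  fixes V :: "'v set" and C :: "'c set"
    and p q :: "'c \<Rightarrow> 'v \<Rightarrow> real" and \<theta> :: "'v \<Rightarrow> real"
    and \<sigma> :: "'c set pmf" and ka kd :: nat and \<epsilon> :: real and Sd :: "'c set"
  assumes "finite V" and "finite C"
    and "\<And>u v. 0 \<le> p u v \<and> p u v \<le> 1"
    and "\<And>u v. 0 \<le> q u v \<and> q u v \<le> 1"
    and "\<And>u v. u \<notin> C \<or> v \<notin> V \<Longrightarrow> p u v = 0 \<and> q u v = 0"
    and "\<And>v. \<theta> v \<in> {0, 1}"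
    and "\<And>Sa. Sa \<in> set_pmf \<sigma> \<Longrightarrow> Sa \<subseteq> C \<and> card Sa \<le> ka"
    and "0 < \<epsilon>" and "\<epsilon> \<le> real (card V)"
    and "greedy_output (gdef V p q \<theta> \<sigma>) C (nat \<lceil>ln (real (card V) / \<epsilon>) * real kd\<rceil>) Sd"
  shows "\<forall>Sstar. Sstar \<subseteq> C \<and> card Sstar \<le> kd \<longrightarrow>
           measure_pmf.expectation \<sigma> (\<lambda>Sa. fobj V p q \<theta> Sd Sa)
             \<le> measure_pmf.expectation \<sigma> (\<lambda>Sa. fobj V p q \<theta> Sstar Sa) + \<epsilon>"
proof (intro allI impI)
  fix T assume T: "T \<subseteq> C \<and> card T \<le> kd"
  have \<theta>_bounds: "0 \<le> \<theta> v \<and> \<theta> v \<le> 1" for v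
    using assms(6)[of v] by auto
  note gdef_mono = gdef_mono[where p = p and q = q, OF assms(3,4) \<theta>_bounds]
    and gdef_union_le_sum = gdef_union_le_sum[where p = p and q = q, OF assms(3,4) \<theta>_bounds]
  have "gdef V p q \<theta> \<sigma> T - gdef V p q \<theta> \<sigma> Sd \<le> \<epsilon>"
  proof (rule greedy_output_additive_error[OF assms(2) _ _ assms(10) _ _ _ assms(8,9)])
    show "gdef V p q \<theta> \<sigma> A \<le> gdef V p q \<theta> \<sigma> B" if "A \<subseteq> B" "B \<subseteq> C" for A B
      using gdef_mono rev_finite_subset[OF assms(2)] that by meson
    show "gdef V p q \<theta> \<sigma> (S \<union> T') - gdef V p q \<theta> \<sigma> S
            \<le> (\<Sum>c\<in>T'. gdef V p q \<theta> \<sigma> (insert c S) - gdef V p q \<theta> \<sigma> S)"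
      if "S \<subseteq> C" "T' \<subseteq> C" for S T'
      using gdef_union_le_sum rev_finite_subset[OF assms(2)] that by meson
    have "gdef V p q \<theta> \<sigma> T \<le> real (card V)"
      using gdef_le_card[where p = p and q = q, OF assms(3,4) \<theta>_bounds] .
    then show "gdef V p q \<theta> \<sigma> T - gdef V p q \<theta> \<sigma> {} \<le> real (card V)"
      by simp
    show "ln (real (card V) / \<epsilon>) * real kd \<le> real (nat \<lceil>ln (real (card V) / \<epsilon>) * real kd\<rceil>)"
      by (rule real_nat_ceiling_ge)
    show "T \<subseteq> C" "card T \<le> kd" using T by auto
  qed
  then show "measure_pmf.expectation \<sigma> (\<lambda>Sa. fobj V p q \<theta> Sd Sa)
               \<le> measure_pmf.expectation \<sigma> (\<lambda>Sa. fobj V p q \<theta> T Sa) + \<epsilon>"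
    by (simp add: gdef_eq_expectation_diff[where p = p, OF assms(3)])
qed

end
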